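(* Let $A\in M_n$. Suppose that for every $c\in\mathbb{R}^n$ the $c$-numerical range $W_c(A)$ is a closed circular disc centered at $0$ (possibly of radius $0$). Then $A$ is nilpotent.
   Context: $M_n$ denotes the space of $n\times n$ complex matrices. For $c=(c_1,\dots,c_n)^t\in\mathbb{R}^n$, the $c$-numerical range of $A\in M_n$ is $W_c(A)=\{\sum_{j=1}^n c_jx_j^*Ax_j:\ x_1,\dots,x_n\in\mathbb{C}^n\text{ orthonormal}\}$. *)

theory Defs
  imports "HOL-Analysis.Analysis"
begin

definition cinner :: "complex ^ 'n \<Rightarrow> complex ^ 'n \<Rightarrow> complex" where
  "cinner x y = (\<Sum>i\<in>UNIV. cnj (x $ i) * y $ i)"

definition orthonormal_family :: "('n \<Rightarrow> complex ^ 'n) \<Rightarrow> bool" where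
  "orthonormal_family x \<longleftrightarrow>
     (\<forall>j k. cinner (x j) (x k) = (if j = k then 1 else 0))"

definition c_numerical_range :: "real ^ 'n \<Rightarrow> complex ^ 'n ^ 'n \<Rightarrow> complex set" where
  "c_numerical_range c A =
     {(\<Sum>j\<in>UNIV. complex_of_real (c $ j) * cinner (x j) (A *v x j)) | x. orthonormal_family x}"

definition matrix_power :: "complex ^ 'n ^ 'n \<Rightarrow> nat \<Rightarrow> complex ^ 'n ^ 'n" where
  "matrix_power A k = (((**) A) ^^ k) (mat 1)"

definition nilpotent_matrix :: "complex ^ 'n ^ 'n \<Rightarrow> bool" where
  "nilpotent_matrix A \<longleftrightarrow> (\<exists>k. matrix_power A k = 0)"

end

theory Submission
  imports Defs "HOL-Computational_Algebra.Fundamental_Theorem_Algebra"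
begin

text \<open>For \<open>|w| = 1\<close> the matrix \<open>H(w) = w\<^sup>* A + w A\<^sup>*\<close> is Hermitian, and for real \<open>c\<close> the sum
  \<open>\<Sum> c\<^sub>j x\<^sub>j\<^sup>* H(w) x\<^sub>j\<close> is \<open>2 Re (w\<^sup>* z)\<close> for the corresponding point \<open>z\<close> of \<open>W\<^sub>c(A)\<close>. Since every
  \<open>W\<^sub>c(A)\<close> is invariant under rotations, every weighted eigenvalue sum \<open>\<Sum> c\<^sub>j \<mu>\<^sub>j\<close> of \<open>H(w\<^sub>1)\<close>
  is a weighted diagonal sum of \<open>H(w\<^sub>2)\<close> in some orthonormal basis. With the weights
  \<open>c\<^sub>j = 1/(t - \<mu>\<^sub>j)\<close> concavity of \<open>ln\<close> turns this into \<open>\<Sum> ln (t - \<nu>\<^sub>i) \<le> \<Sum> ln (t - \<mu>\<^sub>i)\<close> for large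
  \<open>t\<close>, so by symmetry all \<open>H(w)\<close> have the same spectrum \<open>\<mu>\<close>. As \<open>sI - A - w\<^sup>2 A\<^sup>* = w (s w\<^sup>* I - H(w))\<close>,
  the polynomial \<open>det (sI - A - w\<^sup>2 A\<^sup>*)\<close> in \<open>w\<close> agrees with \<open>\<Prod> (s - w \<mu>\<^sub>i)\<close> on the unit circle,
  hence everywhere; at \<open>w = 0\<close> this says \<open>det (sI - A) = s\<^sup>n\<close>. Thus \<open>A\<close> has no nonzero eigenvalue,
  and an annihilating polynomial of any vector then shows \<open>A\<^sup>n = 0\<close>.\<close>

lemma cinner_add_right: "cinner x (y + z) = cinner x y + cinner x z"
  by (simp add: cinner_def distrib_left sum.distrib)

lemma cinner_diff_right: "cinner x (y - z) = cinner x y - cinner x z"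
  by (simp add: cinner_def right_diff_distrib sum_subtractf)

lemma cinner_scale_right: "cinner x (c *s y) = c * cinner x y"
  by (simp add: cinner_def sum_distrib_left algebra_simps)

lemma cinner_scale_left: "cinner (c *s x) y = cnj c * cinner x y"
  by (simp add: cinner_def sum_distrib_left algebra_simps)

lemma cinner_sum_right: "cinner x (sum f S) = (\<Sum>k\<in>S. cinner x (f k))"
  unfolding cinner_def sum_component by (simp add: sum_distrib_left) (rule sum.swap)

lemma cinner_zero_right [simp]: "cinner x 0 = 0"
  by (simp add: cinner_def)

lemma cinner_cnj: "cnj (cinner x y) = cinner y x"
  by (simp add: cinner_def mult.commute)

lemma cinner_self: "cinner x x = of_real (\<Sum>i\<in>UNIV. (cmod (x $ i))\<^sup>2)"
  unfolding cinner_def of_real_sum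
  by (intro sum.cong refl) (metis complex_norm_square of_real_power mult.commute)

lemma cinner_self_eq_0: "cinner x x = 0 \<longleftrightarrow> x = 0"
proof
  assume "cinner x x = 0"
  hence "(\<Sum>i\<in>UNIV. (cmod (x $ i))\<^sup>2) = 0"
    unfolding cinner_self of_real_eq_0_iff .
  hence "\<forall>i\<in>UNIV. (cmod (x $ i))\<^sup>2 = 0"
    by (subst sum_nonneg_eq_0_iff[symmetric]) auto
  thus "x = 0" by (simp add: vec_eq_iff)
qed simp

lemma unit_multiple_exists:
  assumes "x \<noteq> 0"
  shows "\<exists>c. cinner (c *s x) (c *s x) = 1"
proof -
  define s where "s = (\<Sum>i\<in>UNIV. (cmod (x $ i))\<^sup>2)"
  have xx: "cinner x x = of_real s" unfolding s_def by (rule cinner_self)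
  have "s \<noteq> 0" using assms xx cinner_self_eq_0[of x] by auto
  moreover have "s \<ge> 0" unfolding s_def by (simp add: sum_nonneg)
  ultimately have "s > 0" by simp
  hence "cinner (of_real (1 / sqrt s) *s x) (of_real (1 / sqrt s) *s x) = 1"
    by (simp add: cinner_scale_left cinner_scale_right xx field_simps flip: of_real_mult)
  thus ?thesis by blast
qed

definition conj_transpose :: "complex^'n^'m \<Rightarrow> complex^'m^'n" where
  "conj_transpose M = (\<chi> i j. cnj (M $ j $ i))"

lemma cinner_conj_transpose: "cinner x (M *v y) = cinner (conj_transpose M *v x) y"
  unfolding cinner_def conj_transpose_def matrix_vector_mult_def
  by (simp add: sum_distrib_left sum_distrib_right algebra_simps) (rule sum.swap)

lemma conj_transpose_conj_transpose [simp]: "conj_transpose (conj_transpose M) = M"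
  by (simp add: conj_transpose_def vec_eq_iff)

definition column_matrix :: "('n \<Rightarrow> complex^'m) \<Rightarrow> complex^'n^'m" where
  "column_matrix u = (\<chi> r j. u j $ r)"

lemma orthonormal_family_unitary:
  assumes "orthonormal_family u"
  shows "conj_transpose (column_matrix u) ** column_matrix u = mat 1"
    and "column_matrix u ** conj_transpose (column_matrix u) = mat 1"
proof -
  show *: "conj_transpose (column_matrix u) ** column_matrix u = mat 1"
    using assms unfolding orthonormal_family_def
    by (simp add: vec_eq_iff matrix_matrix_mult_def conj_transpose_def column_matrix_def
        mat_def cinner_def)
  show "column_matrix u ** conj_transpose (column_matrix u) = mat 1"
    using matrix_left_right_inverse * by blast
qed

lemma orthonormal_family_expansion:
  assumes "orthonormal_family u"
  shows "x = (\<Sum>j\<in>UNIV. cinner (u j) x *s u j)"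
proof -
  have "x = column_matrix u *v (conj_transpose (column_matrix u) *v x)"
    by (simp add: matrix_vector_mul_assoc orthonormal_family_unitary[OF assms])
  also have "\<dots> = (\<Sum>j\<in>UNIV. cinner (u j) x *s u j)"
    by (simp add: vec_eq_iff matrix_vector_mult_def conj_transpose_def column_matrix_def
        cinner_def sum_component mult.commute)
  finally show ?thesis .
qed

lemma cinner_parseval:
  assumes "orthonormal_family u"
  shows "cinner x y = (\<Sum>j\<in>UNIV. cnj (cinner (u j) x) * cinner (u j) y)"
proof -
  have "cinner x y = cinner x (\<Sum>j\<in>UNIV. cinner (u j) y *s u j)"
    using orthonormal_family_expansion[OF assms, of y] by simp
  also have "\<dots> = (\<Sum>j\<in>UNIV. cnj (cinner (u j) x) * cinner (u j) y)"
    by (simp add: cinner_sum_right cinner_scale_right cinner_cnj mult.commute)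
  finally show ?thesis .
qed

lemma cinner_self_parseval:
  assumes "orthonormal_family u"
  shows "cinner x x = of_real (\<Sum>j\<in>UNIV. (cmod (cinner (u j) x))\<^sup>2)"
  unfolding cinner_parseval[OF assms, of x x] of_real_sum
  by (intro sum.cong refl) (metis complex_norm_square of_real_power mult.commute)

definition hermitian :: "complex^'n^'n \<Rightarrow> bool" where
  "hermitian H \<longleftrightarrow> conj_transpose H = H"

lemma hermitian_cinner: "hermitian H \<Longrightarrow> cinner x (H *v y) = cinner (H *v x) y"
  by (simp add: cinner_conj_transpose hermitian_def)

definition eigenbasis :: "complex^'n^'n \<Rightarrow> ('n \<Rightarrow> complex^'n) \<Rightarrow> ('n \<Rightarrow> real) \<Rightarrow> bool" where
  "eigenbasis H u \<mu> \<longleftrightarrow> orthonormal_family u \<and> (\<forall>j. H *v u j = of_real (\<mu> j) *s u j)"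

lemma eigenbasis_diagonal:
  assumes "eigenbasis H u \<mu>"
  shows "cinner (u j) (H *v u j) = of_real (\<mu> j)"
  using assms unfolding eigenbasis_def orthonormal_family_def
  by (simp add: cinner_scale_right)

lemma hermitian_quadratic_form:
  assumes h: "hermitian H" and e: "eigenbasis H u \<mu>"
  shows "cinner x (H *v x) = of_real (\<Sum>j\<in>UNIV. \<mu> j * (cmod (cinner (u j) x))\<^sup>2)"
proof -
  have o: "orthonormal_family u" using e by (simp add: eigenbasis_def)
  have *: "cinner (u j) (H *v x) = of_real (\<mu> j) * cinner (u j) x" for j
    using e by (simp add: hermitian_cinner[OF h] eigenbasis_def cinner_scale_left)
  show ?thesis
    unfolding cinner_parseval[OF o, of x "H *v x"] * of_real_sum
    by (intro sum.cong refl)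
       (simp add: of_real_mult complex_norm_square[symmetric] algebra_simps)
qed

lemma mat_mult_left: "(mat c ** X) $ i $ j = c * (X :: 'a::semiring_1^'m^'n) $ i $ j"
proof -
  have "(mat c ** X) $ i $ j = (\<Sum>k\<in>UNIV. (if i = k then c else 0) * X $ k $ j)"
    by (simp add: matrix_matrix_mult_def mat_def)
  also have "\<dots> = (\<Sum>k\<in>UNIV. if i = k then c * X $ k $ j else 0)"
    by (intro sum.cong) auto
  finally show ?thesis by simp
qed

lemma mat_mult_vector: "mat c *v x = c *s (x :: 'a::semiring_1^'n)"
proof -
  have "(mat c *v x) $ i = (\<Sum>k\<in>UNIV. (if i = k then c else 0) * x $ k)" for i
    by (simp add: matrix_vector_mult_def mat_def)
  also have "\<dots> i = (\<Sum>k\<in>UNIV. if i = k then c * x $ k else 0)" for i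
    by (intro sum.cong) auto
  finally show ?thesis by (simp add: vec_eq_iff)
qed

lemma det_mat: "det (mat c :: 'a::comm_ring_1^'n^'n) = c ^ CARD('n)"
  by (subst det_diagonal) (simp_all add: mat_def)

lemma det_scalar_minus_eigenbasis:
  assumes e: "eigenbasis H u \<mu>"
  shows "det (mat z - H) = (\<Prod>i\<in>UNIV. z - of_real (\<mu> i))"
proof -
  have ou: "orthonormal_family u" using e by (simp add: eigenbasis_def)
  let ?U = "column_matrix u"
  have "(mat z - H) *v u j = (z - of_real (\<mu> j)) *s u j" for j
    using e by (simp add: eigenbasis_def matrix_vector_mult_diff_rdistrib mat_mult_vector
        vector_sub_rdistrib)
  hence col: "((mat z - H) ** ?U) $ r $ j = (z - of_real (\<mu> j)) * u j $ r" for r j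
    by (simp add: vec_eq_iff matrix_matrix_mult_def matrix_vector_mult_def column_matrix_def
        left_diff_distrib)
  have rows: "(conj_transpose ?U ** X) $ i $ j = (\<Sum>r\<in>UNIV. cnj (u i $ r) * X $ r $ j)" for X i j
    by (simp add: matrix_matrix_mult_def conj_transpose_def column_matrix_def)
  have "(conj_transpose ?U ** ((mat z - H) ** ?U)) $ i $ j =
      (z - of_real (\<mu> j)) * cinner (u i) (u j)" for i j
    unfolding rows col by (simp add: cinner_def sum_distrib_left algebra_simps)
  hence diag: "(conj_transpose ?U ** ((mat z - H) ** ?U)) $ i $ j =
      (if i = j then z - of_real (\<mu> j) else 0)" for i j
    using ou by (simp add: orthonormal_family_def)
  have "det (conj_transpose ?U) * det ?U = 1"
    using orthonormal_family_unitary(1)[OF ou] by (metis det_I det_mul)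
  hence "det (mat z - H) = det (conj_transpose ?U ** ((mat z - H) ** ?U))"
    by (simp add: det_mul algebra_simps)
  also have "\<dots> = (\<Prod>i\<in>UNIV. z - of_real (\<mu> i))"
    by (subst det_diagonal) (simp_all add: diag)
  finally show ?thesis .
qed

section \<open>Annihilating polynomials and eigenvectors\<close>

lemma matrix_power_0 [simp]: "matrix_power B 0 = mat 1"
  by (simp add: matrix_power_def)

lemma matrix_power_Suc_apply: "matrix_power B (Suc k) *v v = B *v (matrix_power B k *v v)"
  by (simp add: matrix_power_def matrix_vector_mul_assoc)

lemma matrix_power_add_apply:
  "matrix_power B (m + k) *v v = matrix_power B m *v (matrix_power B k *v v)"
  by (induction m) (simp_all add: matrix_power_def matrix_vector_mul_assoc[symmetric])

definition poly_apply :: "complex poly \<Rightarrow> complex^'n^'n \<Rightarrow> complex^'n \<Rightarrow> complex^'n" where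
  "poly_apply p B v = (\<Sum>k\<le>degree p. coeff p k *s (matrix_power B k *v v))"

lemma poly_apply_bound:
  assumes "degree p < N"
  shows "poly_apply p B v = (\<Sum>k<N. coeff p k *s (matrix_power B k *v v))"
  unfolding poly_apply_def
  by (rule sum.mono_neutral_left) (use assms in \<open>auto simp: coeff_eq_0\<close>)

lemma poly_apply_0 [simp]: "poly_apply 0 B v = 0"
  by (simp add: poly_apply_def)

lemma poly_apply_pCons: "poly_apply (pCons a p) B v = a *s v + B *v poly_apply p B v"
proof -
  let ?N = "Suc (degree p)"
  have "degree (pCons a p) < Suc ?N" by (cases "p = 0") auto
  hence "poly_apply (pCons a p) B v = a *s v +
      (\<Sum>k<?N. coeff p k *s (matrix_power B (Suc k) *v v))"
    by (simp add: poly_apply_bound sum.lessThan_Suc_shift del: sum.lessThan_Suc)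
  also have "(\<Sum>k<?N. coeff p k *s (matrix_power B (Suc k) *v v)) =
      B *v (\<Sum>k<?N. coeff p k *s (matrix_power B k *v v))"
    by (simp only: matrix_power_Suc_apply vec.linear_sum[OF matrix_vector_mul_linear_gen]
        vec.linear_scale[OF matrix_vector_mul_linear_gen])
  finally show ?thesis by (simp add: poly_apply_bound[of p ?N])
qed

lemma poly_apply_add: "poly_apply (p + q) B v = poly_apply p B v + poly_apply q B v"
proof -
  let ?N = "Suc (max (degree p) (degree q))"
  have "degree (p + q) < ?N" using degree_add_le_max[of p q] by simp
  thus ?thesis by (simp add: poly_apply_bound[of _ ?N] vector_sadd_rdistrib sum.distrib)
qed

lemma poly_apply_smult: "poly_apply (smult a p) B v = a *s poly_apply p B v"
proof -
  have "degree (smult a p) < Suc (degree p)" using degree_smult_le[of a p] by simp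
  thus ?thesis
    by (simp add: poly_apply_bound[of _ "Suc (degree p)"] vector_smult_assoc
        vec.scale_sum_right)
qed

lemma poly_apply_mult: "poly_apply (p * q) B v = poly_apply p B (poly_apply q B v)"
  by (induction p rule: pCons_induct)
    (simp_all add: mult_pCons_left poly_apply_add poly_apply_smult poly_apply_pCons)

lemma poly_apply_monom: "poly_apply (monom c k) B v = c *s (matrix_power B k *v v)"
proof -
  have "degree (monom c k) < Suc k" using degree_monom_le[of c k] by simp
  hence "poly_apply (monom c k) B v =
      (\<Sum>j<Suc k. coeff (monom c k) j *s (matrix_power B j *v v))"
    by (rule poly_apply_bound)
  also have "\<dots> = (\<Sum>j<Suc k. if j = k then c *s (matrix_power B k *v v) else 0)"
    by (intro sum.cong refl) (auto simp: coeff_monom)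
  finally show ?thesis by (simp add: sum.delta)
qed

lemma poly_apply_sum: "poly_apply (sum f S) B v = (\<Sum>k\<in>S. poly_apply (f k) B v)"
  by (induction S rule: infinite_finite_induct) (simp_all add: poly_apply_add)

lemma poly_apply_diff: "poly_apply (p - q) B v = poly_apply p B v - poly_apply q B v"
  using poly_apply_add[of p "smult (-1) q" B v] poly_apply_smult[of "-1" q B v]
  by (simp add: vec_eq_iff)

lemma poly_apply_1 [simp]: "poly_apply 1 B v = v"
  by (simp add: poly_apply_def)

lemma poly_apply_X_power: "poly_apply ([:0, 1:] ^ m) B v = matrix_power B m *v v"
  by (induction m) (simp_all add: poly_apply_mult poly_apply_pCons matrix_power_Suc_apply)

lemma poly_apply_in_subspace:
  assumes V: "vec.subspace V" "\<forall>x\<in>V. B *v x \<in> V" and v: "v \<in> V"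
  shows "poly_apply p B v \<in> V"
proof -
  have "matrix_power B k *v v \<in> V" for k
    by (induction k) (use V(2) v in \<open>simp_all add: matrix_power_Suc_apply\<close>)
  thus ?thesis
    unfolding poly_apply_def
    by (intro vec.subspace_sum[OF V(1)] vec.subspace_scale[OF V(1)])
qed

text \<open>Factor off a linear term \<open>X - a\<close>: either \<open>q(B) u\<close> is an eigenvector for \<open>a\<close>, or \<open>q\<close> is a
  shorter annihilating polynomial.\<close>
lemma eigenvector_of_annihilating_poly:
  assumes V: "vec.subspace V" "\<forall>x\<in>V. B *v x \<in> V"
  shows "p \<noteq> 0 \<Longrightarrow> u \<in> V \<Longrightarrow> u \<noteq> 0 \<Longrightarrow> poly_apply p B u = 0 \<Longrightarrow>
    \<exists>w\<in>V. w \<noteq> 0 \<and> (\<exists>a. poly p a = 0 \<and> B *v w = a *s w)"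
proof (induction "degree p" arbitrary: p rule: less_induct)
  case less
  show ?case
  proof (cases "degree p = 0")
    case True
    hence "poly_apply p B u = coeff p 0 *s u" by (simp add: poly_apply_def)
    moreover have "coeff p 0 \<noteq> 0"
      using True less(2) leading_coeff_0_iff by fastforce
    ultimately show ?thesis using less(4,5) by (simp add: vector_mul_eq_0)
  next
    case False
    hence "\<not> constant (poly p)" by (simp add: constant_degree)
    then obtain a where a: "poly p a = 0" using fundamental_theorem_of_algebra by blast
    hence "[:- a, 1:] dvd p" using poly_eq_0_iff_dvd by blast
    then obtain q where pq: "p = [:- a, 1:] * q" by (elim dvdE)
    have q: "q \<noteq> 0" using pq less(2) by auto
    have dq: "degree q < degree p"
      using pq q degree_mult_eq[of "[:- a, 1:]" q] by (simp del: mult_pCons_left)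
    define w where "w = poly_apply q B u"
    have "poly_apply p B u = - a *s w + B *v w"
      unfolding pq poly_apply_mult w_def[symmetric] by (simp add: poly_apply_pCons)
    hence eig: "B *v w = a *s w"
      using less(5) by (simp add: vec_eq_iff algebra_simps)
    show ?thesis
    proof (cases "w = 0")
      case True
      then obtain w' b where "w' \<in> V" "w' \<noteq> 0" "poly q b = 0" "B *v w' = b *s w'"
        using less(1)[OF dq q less(3,4)] unfolding w_def by blast
      thus ?thesis using pq by auto
    next
      case False
      thus ?thesis using poly_apply_in_subspace[OF V less(3)] eig a unfolding w_def by blast
    qed
  qed
qed

lemma annihilating_poly_exists:
  fixes B :: "complex^'n^'n"
  shows "\<exists>p. p \<noteq> 0 \<and> degree p \<le> CARD('n) \<and> poly_apply p B v = 0"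
proof (cases "inj_on (\<lambda>k. matrix_power B k *v v) {..CARD('n)}")
  case False
  then obtain i j where ij: "i \<le> CARD('n)" "j \<le> CARD('n)" "i \<noteq> j"
      "matrix_power B i *v v = matrix_power B j *v v"
    unfolding inj_on_def by auto
  define p where "p = monom (1::complex) i - monom 1 j"
  have "coeff p i = 1" using ij by (simp add: p_def coeff_monom)
  hence "p \<noteq> 0" by auto
  moreover have "degree p \<le> CARD('n)"
    by (rule degree_le) (use ij in \<open>auto simp: p_def coeff_monom\<close>)
  moreover have "poly_apply p B v = 0"
    using ij by (simp add: p_def poly_apply_diff poly_apply_monom)
  ultimately show ?thesis by blast
next
  case True
  let ?f = "\<lambda>k. matrix_power B k *v v"
  let ?S = "?f ` {..CARD('n)}"
  have "vec.dim ?S \<le> vec.dim (UNIV :: (complex^'n) set)" by (rule vec.dim_subset) simp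
  also have "\<dots> = CARD('n)" by (simp add: vec.dim_UNIV card_cart_basis)
  finally have "vec.dependent ?S"
    using True by (intro vec.dependent_biggerset_general) (simp add: card_image)
  then obtain t c where t: "finite t" "t \<subseteq> ?S" "(\<Sum>x\<in>t. c x *s x) = 0" "\<exists>x\<in>t. c x \<noteq> 0"
    unfolding vec.dependent_explicit by blast
  define K where "K = {k \<in> {..CARD('n)}. ?f k \<in> t}"
  have tK: "t = ?f ` K" using t(2) unfolding K_def by auto
  have injK: "inj_on ?f K" using True unfolding K_def by (rule inj_on_subset) auto
  have finK: "finite K" unfolding K_def by simp
  define p where "p = (\<Sum>k\<in>K. monom (c (?f k)) k)"
  have cp: "coeff p k = (if k \<in> K then c (?f k) else 0)" for k
    by (simp add: p_def coeff_sum coeff_monom finK)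
  obtain x where x: "x \<in> t" "c x \<noteq> 0" using t(4) by blast
  then obtain k where "k \<in> K" "x = ?f k" using tK by auto
  hence "coeff p k \<noteq> 0" using x cp by simp
  hence "p \<noteq> 0" by auto
  moreover have "degree p \<le> CARD('n)"
    by (rule degree_le) (auto simp: cp K_def)
  moreover have "poly_apply p B v = (\<Sum>x\<in>t. c x *s x)"
    unfolding tK by (simp add: p_def poly_apply_sum poly_apply_monom sum.reindex[OF injK])
  ultimately show ?thesis using t(3) by (intro exI[of _ p]) simp
qed

lemma invariant_subspace_has_eigenvector:
  fixes B :: "complex^'n^'n"
  assumes V: "vec.subspace V" "\<forall>x\<in>V. B *v x \<in> V" and u: "u \<in> V" "u \<noteq> 0"
  shows "\<exists>w\<in>V. w \<noteq> 0 \<and> (\<exists>a. B *v w = a *s w)"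
proof -
  obtain p where "p \<noteq> 0" "poly_apply p B u = 0" using annihilating_poly_exists by blast
  from eigenvector_of_annihilating_poly[OF V this(1) u this(2)] show ?thesis by blast
qed

section \<open>The spectral theorem\<close>

definition orthonormal_list :: "(complex^'n) list \<Rightarrow> bool" where
  "orthonormal_list ws \<longleftrightarrow>
     (\<forall>i<length ws. \<forall>j<length ws. cinner (ws ! i) (ws ! j) = (if i = j then 1 else 0))"

lemma orthonormal_list_complement_nonzero:
  fixes ws :: "(complex^'n) list"
  assumes ws: "orthonormal_list ws" and short: "length ws < CARD('n)"
  shows "\<exists>u. u \<noteq> 0 \<and> (\<forall>w\<in>set ws. cinner w u = 0)"
proof (rule ccontr)
  assume "\<not> ?thesis"
  hence only_0: "u = 0" if "\<forall>i<length ws. cinner (ws ! i) u = 0" for u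
    using that by (metis in_set_conv_nth)
  have "x \<in> vec.span (set ws)" for x
  proof -
    let ?p = "\<Sum>i<length ws. cinner (ws ! i) x *s ws ! i"
    have "cinner (ws ! l) ?p = cinner (ws ! l) x" if l: "l < length ws" for l
    proof -
      have "cinner (ws ! l) ?p =
          (\<Sum>i<length ws. cinner (ws ! i) x * (if l = i then 1 else 0))"
        using ws l unfolding orthonormal_list_def
        by (simp add: cinner_sum_right cinner_scale_right)
      also have "\<dots> = (\<Sum>i<length ws. if i = l then cinner (ws ! i) x else 0)"
        by (intro sum.cong) auto
      finally show ?thesis using l by simp
    qed
    hence "x - ?p = 0" by (intro only_0) (simp add: cinner_diff_right)
    hence "x = ?p" by simp
    also have "\<dots> \<in> vec.span (set ws)"
      by (intro vec.span_sum vec.span_scale vec.span_base) simp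
    finally show ?thesis .
  qed
  hence "vec.dim (UNIV :: (complex^'n) set) \<le> card (set ws)"
    by (intro vec.dim_le_card) auto
  also have "\<dots> \<le> length ws" by (rule card_length)
  finally show False using short by (simp add: vec.dim_UNIV card_cart_basis)
qed

lemma hermitian_eigenvector_list:
  fixes H :: "complex^'n^'n"
  assumes h: "hermitian H"
  shows "k \<le> CARD('n) \<Longrightarrow>
    \<exists>ws. length ws = k \<and> orthonormal_list ws \<and> (\<forall>w\<in>set ws. \<exists>a. H *v w = a *s w)"
proof (induction k)
  case 0
  show ?case by (simp add: orthonormal_list_def)
next
  case (Suc k)
  then obtain ws where ws: "length ws = k" "orthonormal_list ws"
      "\<forall>w\<in>set ws. \<exists>a. H *v w = a *s w"
    by auto
  define V where "V = {x. \<forall>w\<in>set ws. cinner w x = 0}"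
  have "vec.subspace V"
    unfolding vec.subspace_def V_def by (auto simp: cinner_add_right cinner_scale_right)
  moreover have "\<forall>x\<in>V. H *v x \<in> V"
    using ws(3) by (auto simp: V_def hermitian_cinner[OF h] cinner_scale_left)
  moreover obtain u where "u \<in> V" "u \<noteq> 0"
    using orthonormal_list_complement_nonzero[OF ws(2)] ws(1) Suc(2) by (auto simp: V_def)
  ultimately obtain w a where w: "w \<in> V" "w \<noteq> 0" "H *v w = a *s w"
    using invariant_subspace_has_eigenvector by blast
  obtain c where unit: "cinner (c *s w) (c *s w) = 1" using unit_multiple_exists[OF w(2)] by blast
  have orth: "cinner v (c *s w) = 0" "cinner (c *s w) v = 0" if "v \<in> set ws" for v
    using w(1) that cinner_cnj[of v "c *s w"] by (auto simp: V_def cinner_scale_right)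
  have "orthonormal_list (ws @ [c *s w])"
    using ws(1,2) unit orth unfolding orthonormal_list_def
    by (auto simp: nth_append less_Suc_eq)
  moreover have "H *v (c *s w) = a *s (c *s w)"
    by (simp add: vec.linear_scale[OF matrix_vector_mul_linear_gen] w(3) vector_smult_assoc
        mult.commute)
  ultimately show ?case using ws(1,3) by (intro exI[of _ "ws @ [c *s w]"]) auto
qed

lemma hermitian_eigenvalue_real:
  assumes "hermitian H" "H *v x = a *s x" "cinner x x = 1"
  shows "a = of_real (Re a)"
proof -
  have "cinner x (H *v x) = a" using assms(2,3) by (simp add: cinner_scale_right)
  moreover have "cnj (cinner x (H *v x)) = cinner x (H *v x)"
    by (simp add: cinner_cnj hermitian_cinner[OF assms(1)])
  ultimately show ?thesis by (simp add: complex_eq_iff)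
qed

lemma hermitian_eigenbasis_exists:
  fixes H :: "complex^'n^'n"
  assumes h: "hermitian H"
  shows "\<exists>u \<mu>. eigenbasis H u \<mu>"
proof -
  obtain ws where ws: "length ws = CARD('n)" "orthonormal_list ws"
      "\<forall>w\<in>set ws. \<exists>a. H *v w = a *s w"
    using hermitian_eigenvector_list[OF h, of "CARD('n)"] by auto
  obtain g where "bij_betw g (UNIV :: 'n set) {0..<CARD('n)}"
    using ex_bij_betw_finite_nat[of "UNIV :: 'n set"] by auto
  hence g: "g j < CARD('n)" "g i = g j \<longleftrightarrow> i = j" for i j
    by (auto simp: bij_betw_def inj_on_def)
  define u where "u j = ws ! g j" for j
  have on: "orthonormal_family u"
    using ws(1,2) g unfolding orthonormal_family_def orthonormal_list_def u_def by simp
  have "\<exists>r::real. H *v u j = of_real r *s u j" for j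
  proof -
    obtain a where a: "H *v u j = a *s u j" using ws g unfolding u_def by (metis nth_mem)
    have "a = of_real (Re a)"
      using hermitian_eigenvalue_real[OF h a] on by (simp add: orthonormal_family_def)
    thus ?thesis using a by metis
  qed
  then obtain \<mu> where "\<forall>j. H *v u j = of_real (\<mu> j) *s u j" by metis
  thus ?thesis using on unfolding eigenbasis_def by blast
qed

section \<open>A logarithmic majorization\<close>

lemma ln_le_tangent:
  fixes a b :: real
  assumes "0 < a" "0 < b"
  shows "ln b \<le> ln a + (b - a) / a"
proof -
  have "ln (b / a) \<le> b / a - 1" using ln_le_minus_one[of "b / a"] assms by simp
  thus ?thesis using assms by (simp add: ln_div diff_divide_distrib)
qed

lemma sum_weighted_ln_le_ln_mean:
  fixes s a :: "'i \<Rightarrow> real"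
  assumes "finite I" "\<And>i. i \<in> I \<Longrightarrow> 0 \<le> s i" "(\<Sum>i\<in>I. s i) = 1" "\<And>i. i \<in> I \<Longrightarrow> 0 < a i"
  shows "(\<Sum>i\<in>I. s i * ln (a i)) \<le> ln (\<Sum>i\<in>I. s i * a i)"
proof -
  let ?m = "\<Sum>i\<in>I. s i * a i"
  have nonneg: "0 \<le> s i * a i" if "i \<in> I" for i
    by (meson assms(2,4) less_imp_le mult_nonneg_nonneg that)
  have "?m \<noteq> 0"
  proof
    assume "?m = 0"
    hence "\<forall>i\<in>I. s i * a i = 0"
      using assms(1) nonneg by (subst sum_nonneg_eq_0_iff[symmetric]) auto
    hence "\<forall>i\<in>I. s i = 0" using assms(4) by force
    thus False using assms(3) by simp
  qed
  moreover have "?m \<ge> 0" using nonneg by (intro sum_nonneg) auto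
  ultimately have m: "?m > 0" by simp
  have "(\<Sum>i\<in>I. s i * ln (a i)) \<le> (\<Sum>i\<in>I. s i * (ln ?m + (a i - ?m) / ?m))"
    using assms m by (intro sum_mono mult_left_mono ln_le_tangent) auto
  also have "\<dots> = (\<Sum>i\<in>I. s i * ln ?m + s i * a i / ?m - s i)"
    using m by (intro sum.cong refl) (simp add: algebra_simps diff_divide_distrib)
  also have "\<dots> = (\<Sum>i\<in>I. s i) * ln ?m + ?m / ?m - (\<Sum>i\<in>I. s i)"
    by (simp add: sum_subtractf sum.distrib sum_distrib_right flip: sum_divide_distrib)
  also have "\<dots> = ln ?m" using assms(3) m by simp
  finally show ?thesis .
qed

lemma orthonormal_families_doubly_stochastic:
  assumes x: "orthonormal_family x" and v: "orthonormal_family v"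
  shows "(\<Sum>i\<in>UNIV. (cmod (cinner (v i) (x j)))\<^sup>2) = 1"
    and "(\<Sum>j\<in>UNIV. (cmod (cinner (v i) (x j)))\<^sup>2) = 1"
proof -
  have "cinner (x j) (x j) = 1" using x by (simp add: orthonormal_family_def)
  thus "(\<Sum>i\<in>UNIV. (cmod (cinner (v i) (x j)))\<^sup>2) = 1"
    using cinner_self_parseval[OF v, of "x j"] by (metis of_real_eq_1_iff)
  have "cinner (v i) (v i) = 1" using v by (simp add: orthonormal_family_def)
  hence "(\<Sum>j\<in>UNIV. (cmod (cinner (x j) (v i)))\<^sup>2) = 1"
    using cinner_self_parseval[OF x, of "v i"] by (metis of_real_eq_1_iff)
  moreover have "cmod (cinner (x j) (v i)) = cmod (cinner (v i) (x j))" for j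
    by (metis cinner_cnj complex_mod_cnj)
  ultimately show "(\<Sum>j\<in>UNIV. (cmod (cinner (v i) (x j)))\<^sup>2) = 1" by simp
qed

text \<open>Take the weights \<open>c\<^sub>j = 1/(t - \<mu>\<^sub>j)\<close>: the matrix \<open>|\<langle>v\<^sub>i, x\<^sub>j\<rangle>|\<^sup>2\<close> is doubly stochastic,
  so concavity of \<open>ln\<close> can be applied first along its columns and then at the points \<open>t - \<mu>\<^sub>j\<close>.\<close>
lemma sum_ln_shifted_spectrum_le:
  fixes H2 :: "complex^'n^'n"
  assumes h2: "hermitian H2" and e2: "eigenbasis H2 v \<nu>"
    and weighted: "\<And>c. \<exists>x. orthonormal_family x \<and>
        (\<Sum>j\<in>UNIV. c j * Re (cinner (x j) (H2 *v x j))) = (\<Sum>j\<in>UNIV. c j * \<mu> j)"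
    and t: "\<And>i. \<mu> i < t" "\<And>i. \<nu> i < t"
  shows "(\<Sum>i\<in>UNIV. ln (t - \<nu> i)) \<le> (\<Sum>i\<in>UNIV. ln (t - \<mu> i))"
proof -
  define c where "c j = 1 / (t - \<mu> j)" for j
  obtain x where ox: "orthonormal_family x" and
    xe: "(\<Sum>j\<in>UNIV. c j * Re (cinner (x j) (H2 *v x j))) = (\<Sum>j\<in>UNIV. c j * \<mu> j)"
    using weighted by blast
  have ov: "orthonormal_family v" using e2 by (simp add: eigenbasis_def)
  define s where "s i j = (cmod (cinner (v i) (x j)))\<^sup>2" for i j
  define y where "y j = (\<Sum>i\<in>UNIV. s i j * \<nu> i)" for j
  note stoch = orthonormal_families_doubly_stochastic[OF ox ov, folded s_def]
  have ye: "Re (cinner (x j) (H2 *v x j)) = y j" for j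
    unfolding hermitian_quadratic_form[OF h2 e2] y_def s_def by (simp add: mult.commute)
  have mean: "(\<Sum>i\<in>UNIV. s i j * (t - \<nu> i)) = t - y j" for j
    by (simp add: y_def right_diff_distrib sum_subtractf stoch(1) flip: sum_distrib_right)
  have yt: "y j < t" for j
  proof -
    have "y j \<le> (\<Sum>i\<in>UNIV. s i j * Max (range \<nu>))"
      unfolding y_def by (intro sum_mono mult_left_mono) (simp_all add: s_def)
    also have "\<dots> < t" using t(2) by (simp add: stoch(1) flip: sum_distrib_right)
    finally show ?thesis .
  qed
  have concave: "(\<Sum>i\<in>UNIV. s i j * ln (t - \<nu> i)) \<le> ln (t - y j)" for j
    unfolding mean[symmetric]
    by (rule sum_weighted_ln_le_ln_mean) (use stoch(1) t(2) in \<open>simp_all add: s_def\<close>)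
  have "(\<Sum>i\<in>UNIV. ln (t - \<nu> i)) = (\<Sum>i\<in>UNIV. (\<Sum>j\<in>UNIV. s i j) * ln (t - \<nu> i))"
    by (simp add: stoch(2))
  also have "\<dots> = (\<Sum>j\<in>UNIV. \<Sum>i\<in>UNIV. s i j * ln (t - \<nu> i))"
    by (simp add: sum_distrib_right) (rule sum.swap)
  also have "\<dots> \<le> (\<Sum>j\<in>UNIV. ln (t - y j))"
    by (intro sum_mono concave)
  also have "\<dots> \<le> (\<Sum>j\<in>UNIV. ln (t - \<mu> j) - c j * (y j - \<mu> j))"
    using t(1) yt ln_le_tangent[of "t - \<mu> _" "t - y _"]
    by (intro sum_mono) (simp add: c_def algebra_simps diff_divide_distrib)
  also have "\<dots> = (\<Sum>j\<in>UNIV. ln (t - \<mu> j))"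
    using xe by (simp add: ye sum_subtractf right_diff_distrib)
  finally show ?thesis .
qed

section \<open>Rotations of \<open>A\<close> share one spectrum\<close>

text \<open>\<open>w\<^sup>* A + w A\<^sup>*\<close> is twice the Hermitian part of \<open>w\<^sup>* A\<close>; the factor \<open>1/2\<close> is dropped so
  that the pencil identity \<open>w (s w\<^sup>* I - H(w)) = sI - A - w\<^sup>2 A\<^sup>*\<close> below holds without it.\<close>
definition rotated_hermitian :: "complex^'n^'n \<Rightarrow> complex \<Rightarrow> complex^'n^'n" where
  "rotated_hermitian A w = (\<chi> i j. cnj w * A $ i $ j + w * cnj (A $ j $ i))"

lemma hermitian_rotated_hermitian: "hermitian (rotated_hermitian A w)"
  unfolding hermitian_def conj_transpose_def rotated_hermitian_def
  by (simp add: vec_eq_iff algebra_simps)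

lemma rotated_hermitian_quadratic_form:
  "cinner x (rotated_hermitian A w *v x) = of_real (2 * Re (cnj w * cinner x (A *v x)))"
proof -
  have "rotated_hermitian A w *v x = cnj w *s (A *v x) + w *s (conj_transpose A *v x)"
    by (simp add: vec_eq_iff rotated_hermitian_def conj_transpose_def matrix_vector_mult_def
        sum_distrib_left sum.distrib algebra_simps)
  moreover have "cinner x (conj_transpose A *v x) = cnj (cinner x (A *v x))"
    by (simp add: cinner_conj_transpose cinner_cnj)
  ultimately show ?thesis
    by (simp add: cinner_add_right cinner_scale_right complex_eq_iff)
qed

definition circular_c_numerical_ranges :: "complex^'n^'n \<Rightarrow> bool" where
  "circular_c_numerical_ranges A \<longleftrightarrow>
     (\<forall>c z w. z \<in> c_numerical_range c A \<longrightarrow> cmod w = 1 \<longrightarrow> w * z \<in> c_numerical_range c A)"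

lemma circular_c_numerical_ranges_if_discs:
  assumes "\<forall>c. \<exists>r. r \<ge> 0 \<and> c_numerical_range c A = cball 0 r"
  shows "circular_c_numerical_ranges A"
  unfolding circular_c_numerical_ranges_def
proof (intro allI impI)
  fix c z and w :: complex
  assume "z \<in> c_numerical_range c A" "cmod w = 1"
  moreover obtain r where "c_numerical_range c A = cball 0 r" using assms by blast
  ultimately show "w * z \<in> c_numerical_range c A" by (simp add: norm_mult)
qed

lemma rotated_weighted_eigenvalue_sum:
  fixes A :: "complex^'n^'n" and c :: "'n \<Rightarrow> real"
  assumes A: "circular_c_numerical_ranges A" and w1: "cmod w1 = 1" and w2: "cmod w2 = 1"
    and e1: "eigenbasis (rotated_hermitian A w1) u \<mu>"
  shows "\<exists>x. orthonormal_family x \<and>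
    (\<Sum>j\<in>UNIV. c j * Re (cinner (x j) (rotated_hermitian A w2 *v x j))) = (\<Sum>j\<in>UNIV. c j * \<mu> j)"
proof -
  define cv :: "real^'n" where "cv = (\<chi> j. c j)"
  define z where "z = (\<Sum>j\<in>UNIV. of_real (cv $ j) * cinner (u j) (A *v u j))"
  have "z \<in> c_numerical_range cv A"
    using e1 unfolding z_def c_numerical_range_def eigenbasis_def by blast
  define z' where "z' = w2 * cnj w1 * z"
  have "z' \<in> c_numerical_range cv A"
    using A w1 w2 \<open>z \<in> c_numerical_range cv A\<close>
    unfolding circular_c_numerical_ranges_def z'_def by (simp add: norm_mult)
  then obtain x where x: "orthonormal_family x"
    "z' = (\<Sum>j\<in>UNIV. of_real (cv $ j) * cinner (x j) (A *v x j))"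
    unfolding c_numerical_range_def by blast
  have "cnj w2 * w2 = 1" using w2 complex_norm_square[of w2] by (simp add: mult.commute)
  have "(\<Sum>j\<in>UNIV. c j * Re (cinner (x j) (rotated_hermitian A w2 *v x j))) =
      2 * Re (cnj w2 * z')"
    by (simp add: rotated_hermitian_quadratic_form x(2) sum_distrib_left Re_sum cv_def
        algebra_simps)
  also have "cnj w2 * z' = cnj w1 * z"
    unfolding z'_def by (simp add: mult.assoc[symmetric] \<open>cnj w2 * w2 = 1\<close>)
  also have "2 * Re (cnj w1 * z) =
      (\<Sum>j\<in>UNIV. c j * Re (cinner (u j) (rotated_hermitian A w1 *v u j)))"
    by (simp add: rotated_hermitian_quadratic_form z_def sum_distrib_left Re_sum cv_def
        algebra_simps)
  also have "\<dots> = (\<Sum>j\<in>UNIV. c j * \<mu> j)" by (simp add: eigenbasis_diagonal[OF e1])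
  finally show ?thesis using x(1) by blast
qed

lemma poly_eqI_infinite:
  fixes p q :: "'a::idom poly"
  assumes "infinite S" "\<And>x. x \<in> S \<Longrightarrow> poly p x = poly q x"
  shows "p = q"
proof (rule ccontr)
  assume "p \<noteq> q"
  hence "finite {x. poly (p - q) x = 0}" by (intro poly_roots_finite) simp
  moreover have "S \<subseteq> {x. poly (p - q) x = 0}" using assms(2) by auto
  ultimately show False using assms(1) finite_subset by blast
qed

lemma rotated_hermitian_isospectral:
  fixes A :: "complex^'n^'n" and z :: complex
  assumes A: "circular_c_numerical_ranges A" and w1: "cmod w1 = 1" and w2: "cmod w2 = 1"
    and e1: "eigenbasis (rotated_hermitian A w1) u \<mu>"
    and e2: "eigenbasis (rotated_hermitian A w2) v \<nu>"
  shows "(\<Prod>i\<in>UNIV. z - of_real (\<mu> i)) = (\<Prod>i\<in>UNIV. z - of_real (\<nu> i))"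
proof -
  define T where "T = max (Max (range \<mu>)) (Max (range \<nu>))"
  have real_eq: "(\<Prod>i\<in>UNIV. t - \<mu> i) = (\<Prod>i\<in>UNIV. t - \<nu> i)" if "T < t" for t
  proof -
    have t: "\<mu> i < t" "\<nu> i < t" for i
      using \<open>T < t\<close> Max_ge[of "range \<mu>" "\<mu> i"] Max_ge[of "range \<nu>" "\<nu> i"]
      unfolding T_def by auto
    have "(\<Sum>i\<in>UNIV. ln (t - \<nu> i)) \<le> (\<Sum>i\<in>UNIV. ln (t - \<mu> i))"
      using rotated_weighted_eigenvalue_sum[OF A w1 w2 e1] t
      by (intro sum_ln_shifted_spectrum_le[OF hermitian_rotated_hermitian e2])
    moreover have "(\<Sum>i\<in>UNIV. ln (t - \<mu> i)) \<le> (\<Sum>i\<in>UNIV. ln (t - \<nu> i))"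
      using rotated_weighted_eigenvalue_sum[OF A w2 w1 e2] t
      by (intro sum_ln_shifted_spectrum_le[OF hermitian_rotated_hermitian e1])
    ultimately have "exp (\<Sum>i\<in>UNIV. ln (t - \<mu> i)) = exp (\<Sum>i\<in>UNIV. ln (t - \<nu> i))"
      by simp
    thus ?thesis using t by (simp add: exp_sum)
  qed
  have "(\<Prod>i\<in>UNIV. [:- of_real (\<mu> i), 1:]) = (\<Prod>i\<in>UNIV. [:- of_real (\<nu> i), 1:] :: complex poly)"
  proof (rule poly_eqI_infinite)
    show "infinite (of_real ` {T<..} :: complex set)"
      using finite_imageD[of "of_real :: real \<Rightarrow> complex" "{T<..}"] infinite_Ioi[of T]
      by (auto simp: inj_on_def)
  next
    fix x :: complex
    assume "x \<in> of_real ` {T<..}"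
    then obtain t where "T < t" "x = of_real t" by auto
    thus "poly (\<Prod>i\<in>UNIV. [:- of_real (\<mu> i), 1:]) x = poly (\<Prod>i\<in>UNIV. [:- of_real (\<nu> i), 1:]) x"
      using arg_cong[OF real_eq, of t complex_of_real] by (simp add: poly_prod)
  qed
  from arg_cong[OF this, of "\<lambda>p. poly p z"] show ?thesis by (simp add: poly_prod)
qed

section \<open>The characteristic polynomial of \<open>A\<close>\<close>

lemma poly_det: "poly (det M) w = det (\<chi> i j. poly (M $ i $ j) w)"
  unfolding det_def by (simp add: poly_sum poly_prod)

lemma infinite_unit_circle: "infinite (sphere (0::complex) 1)"
proof
  assume "finite (sphere (0::complex) 1)"
  moreover have "connected (sphere (0::complex) 1)" by (rule connected_sphere) simp
  ultimately have "sphere (0::complex) 1 = {} \<or> (\<exists>a. sphere (0::complex) 1 = {a})"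
    by (simp add: connected_finite_iff_sing)
  moreover have "1 \<in> sphere (0::complex) 1" "-1 \<in> sphere (0::complex) 1" by simp_all
  ultimately have "(1::complex) = -1" by (metis empty_iff singletonD)
  thus False by (simp add: complex_eq_iff)
qed

lemma rotated_hermitian_pencil:
  assumes "cmod w = 1"
  shows "mat w ** (mat (s * cnj w) - rotated_hermitian A w) =
    (\<chi> i j. (if i = j then s else 0) - A $ i $ j - w\<^sup>2 * cnj (A $ j $ i))"
proof -
  have "w * cnj w = 1" using assms complex_norm_square[of w] by simp
  hence cw: "cnj w = 1 / w" by (metis mult_zero_left nonzero_mult_div_cancel_left zero_neq_one)
  have "w * ((if i = j then s * cnj w else 0) - (cnj w * A $ i $ j + w * cnj (A $ j $ i))) =
      (if i = j then s else 0) - A $ i $ j - w\<^sup>2 * cnj (A $ j $ i)" for i j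
    using assms by (cases "i = j") (auto simp: cw field_simps power2_eq_square)
  hence "(mat w ** (mat (s * cnj w) - rotated_hermitian A w)) $ i $ j =
      (if i = j then s else 0) - A $ i $ j - w\<^sup>2 * cnj (A $ j $ i)" for i j
    unfolding mat_mult_left by (simp add: mat_def rotated_hermitian_def)
  thus ?thesis by (simp add: vec_eq_iff)
qed

lemma circular_det_scalar_minus_eq_power:
  fixes A :: "complex^'n^'n"
  assumes A: "circular_c_numerical_ranges A"
  shows "det (mat s - A) = s ^ CARD('n)"
proof -
  obtain u \<mu> where e1: "eigenbasis (rotated_hermitian A 1) u \<mu>"
    using hermitian_eigenbasis_exists[OF hermitian_rotated_hermitian] by blast
  define P :: "complex poly^'n^'n" where
    "P = (\<chi> i j. [:(if i = j then s else 0) - A $ i $ j, 0, - cnj (A $ j $ i):])"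
  define Q where "Q = (\<Prod>i\<in>UNIV. [:s, - of_real (\<mu> i):])"
  have "poly (det P) w = poly Q w" if "w \<in> sphere 0 1" for w
  proof -
    obtain v \<nu> where e2: "eigenbasis (rotated_hermitian A w) v \<nu>"
      using hermitian_eigenbasis_exists[OF hermitian_rotated_hermitian] by blast
    have w: "cmod w = 1" using that by simp
    hence ww: "w * cnj w = 1" using complex_norm_square[of w] by simp
    have "(\<chi> i j. poly (P $ i $ j) w) = mat w ** (mat (s * cnj w) - rotated_hermitian A w)"
      by (simp add: rotated_hermitian_pencil[OF w] P_def vec_eq_iff power2_eq_square
          algebra_simps)
    hence "poly (det P) w = w ^ CARD('n) * det (mat (s * cnj w) - rotated_hermitian A w)"
      by (simp add: poly_det det_mul det_mat)
    also have "\<dots> = w ^ CARD('n) * (\<Prod>i\<in>UNIV. s * cnj w - of_real (\<mu> i))"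
      by (simp add: det_scalar_minus_eigenbasis[OF e2]
          rotated_hermitian_isospectral[OF A _ _ e1 e2] w)
    also have "\<dots> = (\<Prod>i\<in>UNIV. w * (s * cnj w - of_real (\<mu> i)))"
      by (simp add: prod.distrib)
    also have "\<dots> = (\<Prod>i\<in>UNIV. s * (w * cnj w) - w * of_real (\<mu> i))"
      by (simp add: algebra_simps)
    finally show ?thesis by (simp add: Q_def poly_prod ww)
  qed
  hence "det P = Q" by (rule poly_eqI_infinite[OF infinite_unit_circle])
  hence "det (\<chi> i j. poly (P $ i $ j) 0) = poly Q 0" by (metis poly_det)
  moreover have "(\<chi> i j. poly (P $ i $ j) 0) = mat s - A"
    by (simp add: vec_eq_iff P_def mat_def)
  ultimately show ?thesis by (simp add: Q_def poly_prod)
qed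

section \<open>Nilpotency\<close>

lemma circular_eigenvalue_eq_0:
  fixes A :: "complex^'n^'n"
  assumes A: "circular_c_numerical_ranges A" and x: "A *v x = a *s x" "x \<noteq> 0"
  shows "a = 0"
proof (rule ccontr)
  assume "a \<noteq> 0"
  hence "invertible (mat a - A)"
    by (simp add: invertible_det_nz circular_det_scalar_minus_eq_power[OF A])
  moreover have "(mat a - A) *v x = 0"
    using x(1) by (simp add: matrix_vector_mult_diff_rdistrib mat_mult_vector)
  ultimately show False
    using x(2) matrix_left_invertible_ker invertible_def by blast
qed

text \<open>Write an annihilating polynomial of \<open>v\<close> as \<open>X\<^sup>m q\<close> with \<open>q(0) \<noteq> 0\<close>. If \<open>A\<^sup>m v \<noteq> 0\<close>, then
  \<open>q(A)\<close> annihilates it, which produces an eigenvalue of \<open>A\<close> among the roots of \<open>q\<close>, all nonzero.\<close>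
lemma circular_matrix_power_card_apply_eq_0:
  fixes A :: "complex^'n^'n"
  assumes A: "circular_c_numerical_ranges A"
  shows "matrix_power A CARD('n) *v v = 0"
proof -
  obtain p where p: "p \<noteq> 0" "degree p \<le> CARD('n)" "poly_apply p A v = 0"
    using annihilating_poly_exists by blast
  define m where "m = order 0 p"
  obtain q where q: "p = [:0, 1:] ^ m * q" "\<not> [:0, 1:] dvd q"
    using order_decomp[OF p(1), of 0] unfolding m_def by auto
  have "m \<le> CARD('n)" using order_degree[OF p(1), of 0] p(2) unfolding m_def by simp
  have "q \<noteq> 0" using q(1) p(1) by auto
  have "poly q 0 \<noteq> 0" using q(2) poly_eq_0_iff_dvd[of q 0] by simp
  have "poly_apply q A (matrix_power A m *v v) = 0"
    using p(3) q(1) by (simp add: mult.commute poly_apply_mult poly_apply_X_power)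
  have "matrix_power A m *v v = 0"
  proof (rule ccontr)
    assume "matrix_power A m *v v \<noteq> 0"
    then obtain w b where "w \<noteq> 0" "poly q b = 0" "A *v w = b *s w"
      using eigenvector_of_annihilating_poly[OF vec.subspace_UNIV _ \<open>q \<noteq> 0\<close>]
        \<open>poly_apply q A (matrix_power A m *v v) = 0\<close> by blast
    thus False using circular_eigenvalue_eq_0[OF A] \<open>poly q 0 \<noteq> 0\<close> by blast
  qed
  hence "matrix_power A (CARD('n) - m + m) *v v = 0" by (simp add: matrix_power_add_apply)
  thus ?thesis using \<open>m \<le> CARD('n)\<close> by simp
qed

theorem mainTheorem17:
  fixes A :: "complex ^ 'n ^ 'n"
  assumes "\<forall>c :: real ^ 'n. \<exists>r::real. r \<ge> 0 \<and> c_numerical_range c A = cball 0 r"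
  shows "nilpotent_matrix A"
proof -
  have "circular_c_numerical_ranges A"
    using assms by (rule circular_c_numerical_ranges_if_discs)
  hence "matrix_power A CARD('n) = 0"
    by (simp add: matrix_eq circular_matrix_power_card_apply_eq_0)
  thus ?thesis unfolding nilpotent_matrix_def by blast
qed

end
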